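(* Consider offline data $\{(s_h^k,a_h^k,r_h^k)\}_{h\in[H]}^{k\in[K]}$ from a behavior policy $\mu$ in a linear MDP, with $\Sigma_h^k=\sum_{t=1}^{k-1}\phi_h(s_h^t,a_h^t)\phi_h(s_h^t,a_h^t)^T+I$. Assume there exists an optimal policy $\pi^*$ with $d^{\pi^*}_h(s,a)>0\implies d^\mu_h(s,a)>0$ for all $(h,s,a)$, and that $\kappa_h^{-1}:=\inf_{(s,a):d^\mu_h(s,a)>0}d^\mu_h(s,a)>0$ for all $h$. Then for any $h\in[H]$, \[ \sum_{k=1}^K\frac{d^*_h(s_h^k,a_h^k)}{d^\mu_h(s_h^k,a_h^k)}\|\phi_h(s_h^k,a_h^k)\|_{(\Sigma_h^k)^{-1}}\le\kappa_h\sqrt{2Kd\log(1+K/d)}, \] where $d^*_h=d^{\pi^*}_h$.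
   Context: Episodic MDP with horizon $H$; $d^\pi_h(s,a)$ is the state-action visitation density at step $h$ under policy $\pi$, assumed $\le1$. Linear MDP: known features $\phi_h:\mathcal{S}\times\mathcal{A}\to\mathbb{R}^d$ with $\|\phi_h(s,a)\|_2\le1$ (rewards and transitions linear in $\phi_h$). $\|x\|_A=\sqrt{x^TAx}$. *)

theory Defs
  imports "HOL-Analysis.Analysis"
begin

definition outer :: "real^'d \<Rightarrow> real^'d^'d" where
  "outer x = (\<chi> i j. x $ i * x $ j)"

definition Sigma ::
  "(nat \<Rightarrow> 's \<Rightarrow> 'a \<Rightarrow> real^'d) \<Rightarrow> (nat \<Rightarrow> nat \<Rightarrow> 's) \<Rightarrow> (nat \<Rightarrow> nat \<Rightarrow> 'a)
   \<Rightarrow> nat \<Rightarrow> nat \<Rightarrow> real^'d^'d" where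
  "Sigma \<phi> s a h k = (\<Sum>t\<in>{1..<k}. outer (\<phi> h (s h t) (a h t))) + mat 1"

definition wnorm :: "real^'d \<Rightarrow> real^'d^'d \<Rightarrow> real" where
  "wnorm x A = sqrt (x \<bullet> (A *v x))"

definition kappa :: "(nat \<Rightarrow> 's \<Rightarrow> 'a \<Rightarrow> real) \<Rightarrow> nat \<Rightarrow> real" where
  "kappa dmu h = 1 / Inf {dmu h x y | x y. dmu h x y > 0}"

end

theory Submission
  imports Defs
begin

text \<open>Since d*_h \<le> 1 and every sample lies in the support of d^mu_h, each density ratio is at
  most kappa_h, so it suffices to bound the sum of the norms ||phi_k|| in the metric (Sigma_k)^-1
  (the elliptical potential). By Cauchy-Schwarz this sum is at most sqrt (K * sum_k y_k), where
  y_k = phi_k^T (Sigma_k)^-1 phi_k lies in [0, 1]. The matrix determinant lemma gives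
  det Sigma_(K+1) = prod_k (1 + y_k), and y \<le> 2 ln (1 + y) on [0, 1], so
  sum_k y_k \<le> 2 ln det Sigma_(K+1). Finally, Hadamard's inequality (proved by symmetric Gaussian
  elimination) and AM-GM bound det Sigma_(K+1) by (trace Sigma_(K+1) / d)^d \<le> (1 + K/d)^d.\<close>

definition replace_row :: "'a^'n^'n \<Rightarrow> 'n \<Rightarrow> 'a^'n \<Rightarrow> 'a^'n^'n" where
  "replace_row A i x = (\<chi> k. if k = i then x else row k A)"

lemma det_replace_row_mat_1:
  fixes y :: "'a::field^'n::finite"
  shows "det (replace_row (mat 1) i y) = y $ i"
proof -
  have expansion: "(\<Sum>j\<in>UNIV. y$j *s row j (mat 1)) = y"
    by (simp add: row_def mat_def vec_eq_iff if_distrib cong: if_cong)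
  show ?thesis
    using cramer_lemma_transpose[of i y "mat 1"] unfolding replace_row_def expansion by simp
qed

lemma det_replace_row_add_scaled:
  fixes B :: "'a::comm_ring_1^'n::finite^'n"
  shows "det (replace_row B k (row k B + c *s x)) = det B + c * det (replace_row B k x)"
proof -
  have "(\<chi> i. if i = k then row k B else row i B) = B"
    by (simp add: vec_eq_iff row_def)
  then show ?thesis
    unfolding replace_row_def det_row_add det_row_mul by simp
qed

lemma det_replace_row_twice:
  fixes B :: "'a::comm_ring_1^'n::finite^'n"
  assumes "i \<noteq> k"
  shows "det (replace_row (replace_row B i x) k x) = 0"
  using assms by (intro det_identical_rows[OF assms]) (auto simp: replace_row_def row_def vec_eq_iff)

lemma det_add_scaled_rows:
  fixes A :: "'a::comm_ring_1^'n::finite^'n"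
  assumes "finite S"
  shows "det (\<chi> i. if i \<in> S then row i A + (w$i) *s x else row i A)
       = det A + (\<Sum>i\<in>S. w$i * det (replace_row A i x))"
  using assms
proof (induction S arbitrary: A rule: finite_induct)
  case empty
  have "(\<chi> i. row i A) = A" by (simp add: vec_eq_iff row_def)
  then show ?case by simp
next
  case (insert k S)
  define A' where "A' = replace_row A k (row k A + (w$k) *s x)"
  have rows: "(\<chi> i. if i \<in> insert k S then row i A + (w$i) *s x else row i A) =
      (\<chi> i. if i \<in> S then row i A' + (w$i) *s x else row i A')"
    using insert.hyps by (auto simp: vec_eq_iff row_def A'_def replace_row_def)
  have "det (replace_row A' i x) = det (replace_row A i x)" if "i \<in> S" for i
  proof -
    have ik: "i \<noteq> k" using that insert.hyps by auto
    then have "replace_row A' i x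
        = replace_row (replace_row A i x) k (row k (replace_row A i x) + (w$k) *s x)"
      by (auto simp: vec_eq_iff row_def A'_def replace_row_def)
    then show ?thesis
      by (simp add: det_replace_row_add_scaled det_replace_row_twice[OF ik])
  qed
  then show ?case
    unfolding rows insert.IH A'_def det_replace_row_add_scaled using insert.hyps
    by (simp add: algebra_simps)
qed

definition rank_one :: "'a::times^'n \<Rightarrow> 'a^'m \<Rightarrow> 'a^'m^'n" where
  "rank_one u v = (\<chi> i j. u$i * v$j)"

lemma det_mat_1_add_rank_one:
  fixes u v :: "real^'n::finite"
  shows "det (mat 1 + rank_one u v) = 1 + u \<bullet> v"
proof -
  have "mat 1 + rank_one u v
      = (\<chi> i. if i \<in> UNIV then row i (mat 1) + (u$i) *s v else row i (mat 1))"
    by (simp add: vec_eq_iff row_def rank_one_def)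
  then show ?thesis
    using det_add_scaled_rows[of UNIV "mat 1" u v]
    by (simp add: det_replace_row_mat_1 inner_vec_def)
qed

lemma matrix_mul_matrix_inv:
  fixes A :: "'a::semiring_1^'n^'n"
  assumes "invertible A"
  shows "A ** matrix_inv A = mat 1"
  using someI_ex[OF assms[unfolded invertible_def]] unfolding matrix_inv_def by blast

text \<open>The matrix determinant lemma, via V + x x^T = V (I + (V^-1 x) x^T).\<close>
lemma det_add_outer:
  fixes V :: "real^'n::finite^'n"
  assumes "invertible V"
  shows "det (V + outer x) = det V * (1 + x \<bullet> (matrix_inv V *v x))"
proof -
  define z where "z = matrix_inv V *v x"
  have Vz: "V *v z = x"
    by (simp add: z_def matrix_vector_mul_assoc matrix_mul_matrix_inv[OF assms])
  have "(V ** rank_one z x)$i$j = (V *v z)$i * x$j" for i j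
    by (simp add: matrix_matrix_mult_def rank_one_def matrix_vector_mult_def sum_distrib_right
        mult.assoc)
  then have "V ** rank_one z x = outer x"
    by (simp add: vec_eq_iff Vz outer_def)
  then have "V + outer x = V ** (mat 1 + rank_one z x)"
    by (simp add: matrix_add_ldistrib)
  then show ?thesis
    by (simp add: det_mul det_mat_1_add_rank_one z_def inner_commute)
qed

definition pos_def :: "real^'n^'n \<Rightarrow> bool" where
  "pos_def A \<longleftrightarrow> (\<forall>x. x \<noteq> 0 \<longrightarrow> 0 < x \<bullet> (A *v x))"

definition offdiag_zero_on :: "'n set \<Rightarrow> real^'n^'n \<Rightarrow> bool" where
  "offdiag_zero_on P B \<longleftrightarrow> (\<forall>i\<in>P. \<forall>j. j \<noteq> i \<longrightarrow> B$i$j = 0 \<and> B$j$i = 0)"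

lemma pos_def_diag_pos:
  fixes A :: "real^'n::finite^'n"
  assumes "pos_def A"
  shows "0 < A$i$i"
proof -
  have "axis i 1 \<bullet> (A *v axis i 1) = A$i$i"
    by (simp add: inner_commute[of "axis i 1"] inner_axis matrix_vector_mult_basis column_def)
  then show ?thesis
    using assms unfolding pos_def_def by (metis axis_eq_0_iff one_neq_zero)
qed

lemma pos_def_invertible:
  fixes A :: "real^'n::finite^'n"
  assumes "pos_def A"
  shows "invertible A"
proof -
  have "\<forall>x. A *v x = 0 \<longrightarrow> x = 0"
    using assms unfolding pos_def_def by force
  then show ?thesis
    by (simp add: invertible_left_inverse matrix_left_invertible_ker)
qed

lemma pos_def_congruence:
  fixes B E :: "real^'n::finite^'n"
  assumes "pos_def B" "det E \<noteq> 0"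
  shows "pos_def (E ** B ** transpose E)"
  unfolding pos_def_def
proof (intro allI impI)
  fix x :: "real^'n"
  assume "x \<noteq> 0"
  moreover have "invertible (transpose E)"
    using assms(2) by (simp add: invertible_det_nz)
  ultimately have "transpose E *v x \<noteq> 0"
    by (metis matrix_left_invertible_ker invertible_left_inverse)
  then have "0 < (transpose E *v x) \<bullet> (B *v (transpose E *v x))"
    using assms(1) unfolding pos_def_def by blast
  also have "\<dots> = x \<bullet> ((E ** B ** transpose E) *v x)"
    by (metis dot_lmul_matrix matrix_vector_mul_assoc transpose_matrix_vector transpose_transpose)
  finally show "0 < x \<bullet> ((E ** B ** transpose E) *v x)" .
qed

definition elimination_matrix :: "real^'n^'n \<Rightarrow> 'n \<Rightarrow> real^'n^'n" where
  "elimination_matrix B p =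
     mat 1 - rank_one (\<chi> i. if i = p then 0 else B$i$p / B$p$p) (axis p 1)"

lemma det_elimination_matrix: "det (elimination_matrix B p) = 1"
proof -
  have "det (elimination_matrix B p) = det (transpose (elimination_matrix B p))"
    by simp
  also have "transpose (elimination_matrix B p)
      = replace_row (mat 1) p (axis p 1 - (\<chi> i. if i = p then 0 else B$i$p / B$p$p))"
    by (simp add: vec_eq_iff elimination_matrix_def transpose_def replace_row_def row_def mat_def
        rank_one_def axis_def)
  also have "det \<dots> = 1"
    by (simp add: det_replace_row_mat_1)
  finally show ?thesis .
qed

text \<open>The congruence leaves the pivot B_pp alone in its row and column and replaces the rest
  of B by the Schur complement of B_pp.\<close>
lemma elimination_congruence_entry:
  fixes B :: "real^'n::finite^'n"
  assumes sym: "transpose B = B" and pivot: "B$p$p \<noteq> 0"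
  defines "E \<equiv> elimination_matrix B p"
  shows "(E ** B ** transpose E)$i$j
    = (if i = p \<or> j = p then if i = j then B$p$p else 0 else B$i$j - B$i$p * B$p$j / B$p$p)"
proof -
  define c :: "real^'n" where "c = (\<chi> i. if i = p then 0 else B$i$p / B$p$p)"
  have E_eq: "E = mat 1 - rank_one c (axis p 1)"
    unfolding E_def elimination_matrix_def c_def ..
  have left: "(E ** M)$i$l = M$i$l - c$i * M$p$l" for M :: "real^'n^'n" and i l
  proof -
    have "(E ** M)$i$l
        = (\<Sum>k\<in>UNIV. (if k = i then M$k$l else 0) - c$i * (if k = p then M$k$l else 0))"
      unfolding E_eq matrix_matrix_mult_def
      by (simp, rule sum.cong) (auto simp: mat_def rank_one_def axis_def left_diff_distrib)
    then show ?thesis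
      by (simp add: sum_subtractf sum_distrib_left[symmetric])
  qed
  have right: "(M ** transpose E)$i$j = M$i$j - c$j * M$i$p" for M :: "real^'n^'n" and i j
  proof -
    have "(M ** transpose E)$i$j
        = (\<Sum>k\<in>UNIV. (if k = j then M$i$k else 0) - c$j * (if k = p then M$i$k else 0))"
      unfolding E_eq matrix_matrix_mult_def
      by (simp, rule sum.cong) (auto simp: transpose_def mat_def rank_one_def axis_def
          right_diff_distrib)
    then show ?thesis
      by (simp add: sum_subtractf sum_distrib_left[symmetric])
  qed
  have "B$j$p = B$p$j"
    using sym by (metis transpose_def vec_lambda_beta)
  then show ?thesis
    unfolding right left using pivot
    by (cases "i = p"; cases "j = p") (simp_all add: c_def field_simps)
qed

lemma pos_def_eliminate_pivot:
  fixes B :: "real^'n::finite^'n"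
  assumes pd: "pos_def B" and sym: "transpose B = B" and cleared: "offdiag_zero_on P B"
  obtains B' where "pos_def B'" "transpose B' = B'" "det B' = det B" "\<And>i. B'$i$i \<le> B$i$i"
    "offdiag_zero_on (insert p P) B'"
proof -
  define E where "E = elimination_matrix B p"
  define B' where "B' = E ** B ** transpose E"
  have B_sym: "B$i$j = B$j$i" for i j
    using sym by (metis transpose_def vec_lambda_beta)
  have "0 < B$p$p"
    by (rule pos_def_diag_pos[OF pd])
  then have entry: "B'$i$j
      = (if i = p \<or> j = p then if i = j then B$p$p else 0 else B$i$j - B$i$p * B$p$j / B$p$p)"
    for i j
    unfolding B'_def E_def by (simp add: elimination_congruence_entry[OF sym])
  show thesis
  proof (rule that)
    show "pos_def B'"
      unfolding B'_def
      by (rule pos_def_congruence[OF pd]) (simp add: E_def det_elimination_matrix)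
    have "B'$j$i = B'$i$j" for i j
      unfolding entry using B_sym[of i j] B_sym[of j p] B_sym[of p i] by auto
    then show "transpose B' = B'"
      by (simp add: vec_eq_iff transpose_def)
    show "det B' = det B"
      by (simp add: B'_def det_mul E_def det_elimination_matrix)
    show "B'$i$i \<le> B$i$i" for i
      using \<open>0 < B$p$p\<close> by (simp add: entry B_sym[of p i] power2_eq_square[symmetric])
    show "offdiag_zero_on (insert p P) B'"
      using cleared by (auto simp: offdiag_zero_on_def entry)
  qed
qed

lemma pos_def_diagonalize_on:
  fixes A :: "real^'n::finite^'n"
  assumes "pos_def A" "transpose A = A" "finite P"
  shows "\<exists>B. pos_def B \<and> transpose B = B \<and> det B = det A \<and> (\<forall>i. B$i$i \<le> A$i$i)
    \<and> offdiag_zero_on P B"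
  using assms(3)
proof (induction P rule: finite_induct)
  case empty
  then show ?case
    using assms by (auto simp: offdiag_zero_on_def)
next
  case (insert p P)
  then obtain B where "pos_def B" "transpose B = B" "det B = det A" "\<forall>i. B$i$i \<le> A$i$i"
    "offdiag_zero_on P B"
    by blast
  moreover obtain B' where "pos_def B'" "transpose B' = B'" "det B' = det B"
    "\<And>i. B'$i$i \<le> B$i$i" "offdiag_zero_on (insert p P) B'"
    using pos_def_eliminate_pivot[OF calculation(1,2,5), where p = p] by blast
  ultimately show ?case
    by (metis order_trans)
qed

lemma det_pos_def_le_prod_diag:
  fixes A :: "real^'n::finite^'n"
  assumes "pos_def A" "transpose A = A"
  shows "det A \<le> (\<Prod>i\<in>UNIV. A$i$i)"
proof -
  obtain B where B: "pos_def B" "det B = det A" "\<forall>i. B$i$i \<le> A$i$i" "offdiag_zero_on UNIV B"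
    using pos_def_diagonalize_on[OF assms finite_class.finite_UNIV] by blast
  have "det B = (\<Prod>i\<in>UNIV. B$i$i)"
    using B(4) by (intro det_diagonal) (auto simp: offdiag_zero_on_def)
  also have "\<dots> \<le> (\<Prod>i\<in>UNIV. A$i$i)"
    using B(3) pos_def_diag_pos[OF B(1)] by (intro prod_mono) (auto simp: less_imp_le)
  finally show ?thesis
    using B(2) by simp
qed

lemma det_pos_def_le_trace_power:
  fixes A :: "real^'n::finite^'n"
  assumes "pos_def A" "transpose A = A"
  shows "det A \<le> (trace A / CARD('n)) ^ CARD('n)"
proof -
  have diag_nonneg: "0 \<le> A$i$i" for i
    using pos_def_diag_pos[OF assms(1)] by (simp add: less_imp_le)
  have "(\<Prod>i\<in>UNIV. A$i$i) = ((\<Prod>i\<in>UNIV. A$i$i) powr (1 / CARD('n))) ^ CARD('n)"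
    using diag_nonneg by (simp add: prod_nonneg powr_realpow'[symmetric] powr_powr)
  also have "\<dots> \<le> (\<Sum>i\<in>UNIV. A$i$i / CARD('n)) ^ CARD('n)"
    using diag_nonneg by (intro power_mono arith_geom_mean) auto
  also have "(\<Sum>i\<in>UNIV. A$i$i / CARD('n)) = trace A / CARD('n)"
    by (simp add: trace_def sum_divide_distrib)
  finally show ?thesis
    using det_pos_def_le_prod_diag[OF assms] by linarith
qed

definition regularized_gram :: "(nat \<Rightarrow> real^'n) \<Rightarrow> nat \<Rightarrow> real^'n^'n" where
  "regularized_gram X k = (\<Sum>t\<in>{1..<k}. outer (X t)) + mat 1"

lemma Sigma_eq_regularized_gram:
  "Sigma \<phi> s a h k = regularized_gram (\<lambda>t. \<phi> h (s h t) (a h t)) k"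
  by (simp add: Sigma_def regularized_gram_def)

lemma regularized_gram_Suc:
  assumes "1 \<le> k"
  shows "regularized_gram X (Suc k) = regularized_gram X k + outer (X k)"
proof -
  have "{1..<Suc k} = insert k {1..<k}"
    using assms by auto
  then show ?thesis
    by (simp add: regularized_gram_def algebra_simps)
qed

lemma sum_matrix_vector_mult:
  fixes M :: "'t \<Rightarrow> real^'n::finite^'m"
  assumes "finite S"
  shows "sum M S *v x = (\<Sum>t\<in>S. M t *v x)"
  using assms by (induction S rule: finite_induct) (auto simp: matrix_vector_mult_add_rdistrib)

lemma outer_mult_vector: "outer y *v x = (y \<bullet> x) *\<^sub>R (y::real^'n::finite)"
  by (simp add: vec_eq_iff outer_def matrix_vector_mult_def inner_vec_def sum_distrib_left
      mult_ac)

lemma quadratic_form_regularized_gram: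
  "x \<bullet> (regularized_gram X k *v x) = (\<Sum>t\<in>{1..<k}. (X t \<bullet> x)^2) + x \<bullet> x"
  unfolding regularized_gram_def matrix_vector_mult_add_rdistrib
    sum_matrix_vector_mult[OF finite_atLeastLessThan] outer_mult_vector
  by (simp add: inner_sum_right inner_add_right power2_eq_square inner_commute)

lemma regularized_gram_pos_def: "pos_def (regularized_gram X k)"
  unfolding pos_def_def quadratic_form_regularized_gram
  by (auto intro!: add_nonneg_pos sum_nonneg)

lemma regularized_gram_ge_identity: "x \<bullet> x \<le> x \<bullet> (regularized_gram X k *v x)"
  unfolding quadratic_form_regularized_gram by (simp add: sum_nonneg)

lemma regularized_gram_entry:
  "regularized_gram X k $ i $ j = (\<Sum>t\<in>{1..<k}. X t $ i * X t $ j) + (if i = j then 1 else 0)"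
  by (simp add: regularized_gram_def outer_def mat_def)

lemma transpose_regularized_gram: "transpose (regularized_gram X k) = regularized_gram X k"
  by (simp add: vec_eq_iff transpose_def regularized_gram_entry mult.commute eq_commute)

lemma trace_regularized_gram:
  fixes X :: "nat \<Rightarrow> real^'n::finite"
  shows "trace (regularized_gram X k) = (\<Sum>t\<in>{1..<k}. (norm (X t))^2) + CARD('n)"
  by (simp add: trace_def regularized_gram_entry sum.distrib power2_norm_eq_inner inner_vec_def
      sum.swap[of _ UNIV])

lemma inverse_quadratic_form_bounds:
  fixes V :: "real^'n::finite^'n"
  assumes ge_id: "\<And>x. x \<bullet> x \<le> x \<bullet> (V *v x)"
  shows "0 \<le> v \<bullet> (matrix_inv V *v v)" "v \<bullet> (matrix_inv V *v v) \<le> (norm v)^2"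
proof -
  have pd: "pos_def V"
    unfolding pos_def_def using ge_id by (metis inner_gt_zero_iff order_less_le_trans)
  define z where "z = matrix_inv V *v v"
  have "V *v z = v"
    by (simp add: z_def matrix_vector_mul_assoc matrix_mul_matrix_inv pos_def_invertible[OF pd])
  then have zz: "z \<bullet> z \<le> v \<bullet> z"
    using ge_id[of z] by (simp add: inner_commute)
  then show "0 \<le> v \<bullet> (matrix_inv V *v v)"
    unfolding z_def by (metis inner_ge_zero order_trans)
  have cs: "v \<bullet> z \<le> norm v * norm z"
    by (rule norm_cauchy_schwarz)
  then have "norm z ^ 2 \<le> norm v * norm z"
    using zz by (simp add: power2_norm_eq_inner)
  then have "norm z \<le> norm v"
    by (cases "norm z = 0") (auto simp: power2_eq_square)
  then show "v \<bullet> (matrix_inv V *v v) \<le> (norm v)^2"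
    using cs unfolding z_def power2_eq_square by (meson mult_left_mono norm_ge_zero order_trans)
qed

lemma det_regularized_gram:
  "det (regularized_gram X (Suc m))
     = (\<Prod>k\<in>{1..m}. 1 + X k \<bullet> (matrix_inv (regularized_gram X k) *v X k))"
proof (induction m)
  case 0
  then show ?case
    by (simp add: regularized_gram_def)
next
  case (Suc m)
  then show ?case
    by (simp add: regularized_gram_Suc det_add_outer pos_def_invertible regularized_gram_pos_def
        prod.nat_ivl_Suc' mult.commute)
qed

lemma le_two_ln_one_plus:
  fixes y :: real
  assumes "0 \<le> y" "y \<le> 1"
  shows "y \<le> 2 * ln (1 + y)"
proof -
  have "ln (1 / (1 + y)) \<le> 1 / (1 + y) - 1"
    using assms by (intro ln_le_minus_one) simp
  then have "y / (1 + y) \<le> ln (1 + y)"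
    using assms by (simp add: ln_div field_simps)
  moreover have "y / 2 \<le> y / (1 + y)"
    using assms by (intro divide_left_mono) auto
  ultimately show ?thesis
    by linarith
qed

lemma det_regularized_gram_le:
  fixes X :: "nat \<Rightarrow> real^'n::finite"
  assumes norm_le_1: "\<And>t. norm (X t) \<le> 1"
  shows "det (regularized_gram X (Suc K)) \<le> (1 + real K / real CARD('n)) ^ CARD('n)"
proof -
  define n where "n = real CARD('n)"
  have "(\<Sum>t\<in>{1..<Suc K}. (norm (X t))^2) \<le> (\<Sum>t\<in>{1..<Suc K}. 1)"
    using norm_le_1 by (intro sum_mono) (simp add: power_le_one)
  then have "trace (regularized_gram X (Suc K)) \<le> K + n"
    unfolding trace_regularized_gram n_def by simp
  moreover have "0 \<le> trace (regularized_gram X (Suc K))"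
    unfolding trace_regularized_gram by (simp add: sum_nonneg)
  ultimately have "(trace (regularized_gram X (Suc K)) / n) ^ CARD('n) \<le> ((K + n) / n) ^ CARD('n)"
    by (intro power_mono divide_right_mono) (auto simp: n_def)
  also have "(K + n) / n = 1 + K / n"
    by (simp add: n_def field_simps)
  finally show ?thesis
    using det_pos_def_le_trace_power[OF regularized_gram_pos_def transpose_regularized_gram,
        of X "Suc K"]
    unfolding n_def by linarith
qed

lemma elliptical_potential:
  fixes X :: "nat \<Rightarrow> real^'n::finite"
  assumes norm_le_1: "\<And>t. norm (X t) \<le> 1"
  shows "(\<Sum>k=1..K. X k \<bullet> (matrix_inv (regularized_gram X k) *v X k))
           \<le> 2 * real CARD('n) * ln (1 + real K / real CARD('n))"
proof -
  define y where "y k = X k \<bullet> (matrix_inv (regularized_gram X k) *v X k)" for k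
  have y_bounds: "0 \<le> y k" "y k \<le> 1" for k
    using inverse_quadratic_form_bounds[OF regularized_gram_ge_identity[where X = X and k = k],
        where v = "X k"] norm_le_1[of k] power_le_one[of "norm (X k)" 2]
    by (auto simp: y_def)
  have "(\<Sum>k=1..K. y k) \<le> (\<Sum>k=1..K. 2 * ln (1 + y k))"
    using y_bounds le_two_ln_one_plus by (intro sum_mono) auto
  also have "\<dots> = 2 * ln (\<Prod>k\<in>{1..K}. 1 + y k)"
    using y_bounds by (simp add: ln_prod sum_distrib_left add_nonneg_eq_0_iff)
  also have "\<dots> = 2 * ln (det (regularized_gram X (Suc K)))"
    unfolding y_def det_regularized_gram ..
  also have "\<dots> \<le> 2 * ln ((1 + real K / real CARD('n)) ^ CARD('n))"
  proof -
    have "0 < det (regularized_gram X (Suc K))"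
      unfolding det_regularized_gram using y_bounds[unfolded y_def]
      by (intro prod_pos) (simp add: add_pos_nonneg)
    then show ?thesis
      using det_regularized_gram_le[of X K, OF norm_le_1] by simp
  qed
  also have "\<dots> = 2 * real CARD('n) * ln (1 + real K / real CARD('n))"
    by (simp add: ln_realpow add_pos_nonneg)
  finally show ?thesis
    unfolding y_def .
qed

lemma elliptical_potential_wnorm:
  fixes X :: "nat \<Rightarrow> real^'n::finite"
  assumes "\<And>t. norm (X t) \<le> 1"
  shows "(\<Sum>k=1..K. wnorm (X k) (matrix_inv (regularized_gram X k)))
           \<le> sqrt (2 * real K * real CARD('n) * ln (1 + real K / real CARD('n)))"
proof -
  define y where "y k = X k \<bullet> (matrix_inv (regularized_gram X k) *v X k)" for k
  have "0 \<le> y k" for k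
    unfolding y_def by (rule inverse_quadratic_form_bounds(1)[OF regularized_gram_ge_identity])
  then have "(\<Sum>k=1..K. sqrt (y k))^2 \<le> K * (\<Sum>k=1..K. y k)"
    using sum_squared_le_sum_of_squares[of "\<lambda>k. sqrt (y k)" "{1..K}"]
    by (simp add: mult.commute)
  also have "\<dots> \<le> K * (2 * real CARD('n) * ln (1 + real K / real CARD('n)))"
    unfolding y_def using elliptical_potential[OF assms] by (intro mult_left_mono) auto
  finally show ?thesis
    unfolding wnorm_def y_def by (intro real_le_rsqrt) (simp add: mult_ac)
qed

lemma density_ratio_le_kappa:
  fixes dmu :: "nat \<Rightarrow> 's \<Rightarrow> 'a \<Rightarrow> real"
  assumes "p \<le> 1" "0 < dmu h u v" "0 < Inf {dmu h x y | x y. dmu h x y > 0}"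
  shows "p / dmu h u v \<le> kappa dmu h"
proof -
  let ?S = "{dmu h x y | x y. dmu h x y > 0}"
  have "Inf ?S \<le> dmu h u v"
    using assms(2) by (intro cInf_lower bdd_belowI[of _ 0]) auto
  then have "1 / dmu h u v \<le> 1 / Inf ?S"
    using assms(3) by (simp add: frac_le)
  moreover have "p / dmu h u v \<le> 1 / dmu h u v"
    using assms(1,2) by (simp add: divide_right_mono)
  ultimately show ?thesis
    unfolding kappa_def by linarith
qed

theorem lemma8:
  fixes \<phi> :: "nat \<Rightarrow> 's \<Rightarrow> 'a \<Rightarrow> real^'d"
    and s :: "nat \<Rightarrow> nat \<Rightarrow> 's" and a :: "nat \<Rightarrow> nat \<Rightarrow> 'a"
    and dstar dmu :: "nat \<Rightarrow> 's \<Rightarrow> 'a \<Rightarrow> real"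
    and H K h :: nat
  assumes phi_bound: "\<And>h x y. norm (\<phi> h x y) \<le> 1"
    and dstar_nonneg: "\<And>h x y. 0 \<le> dstar h x y"
    and dstar_le1: "\<And>h x y. dstar h x y \<le> 1"
    and dmu_nonneg: "\<And>h x y. 0 \<le> dmu h x y"
    and support: "\<And>h x y. h \<in> {1..H} \<Longrightarrow> dstar h x y > 0 \<Longrightarrow> dmu h x y > 0"
    and kappa_pos: "\<And>h. h \<in> {1..H} \<Longrightarrow> Inf {dmu h x y | x y. dmu h x y > 0} > 0"
    and data_support: "\<And>h k. h \<in> {1..H} \<Longrightarrow> k \<in> {1..K} \<Longrightarrow> dmu h (s h k) (a h k) > 0"
    and hH: "h \<in> {1..H}"
  shows "(\<Sum>k=1..K. dstar h (s h k) (a h k) / dmu h (s h k) (a h k)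
            * wnorm (\<phi> h (s h k) (a h k)) (matrix_inv (Sigma \<phi> s a h k)))
         \<le> kappa dmu h * sqrt (2 * real K * real CARD('d) * ln (1 + real K / real CARD('d)))"
proof -
  \<comment> \<open>dstar_nonneg, dmu_nonneg and support are unused: data_support already gives dmu > 0
    at the samples.\<close>
  define X where "X t = \<phi> h (s h t) (a h t)" for t
  have ratio: "dstar h (s h k) (a h k) / dmu h (s h k) (a h k) \<le> kappa dmu h"
    if "k \<in> {1..K}" for k
    using dstar_le1 data_support[OF hH that] kappa_pos[OF hH] by (rule density_ratio_le_kappa)
  have "(\<Sum>k=1..K. dstar h (s h k) (a h k) / dmu h (s h k) (a h k)
            * wnorm (X k) (matrix_inv (regularized_gram X k)))
        \<le> (\<Sum>k=1..K. kappa dmu h * wnorm (X k) (matrix_inv (regularized_gram X k)))"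
    using ratio inverse_quadratic_form_bounds(1)[OF regularized_gram_ge_identity]
    by (intro sum_mono mult_right_mono) (auto simp: wnorm_def)
  also have "\<dots> = kappa dmu h * (\<Sum>k=1..K. wnorm (X k) (matrix_inv (regularized_gram X k)))"
    by (simp add: sum_distrib_left)
  also have "\<dots> \<le> kappa dmu h * sqrt (2 * real K * real CARD('d) * ln (1 + real K / real CARD('d)))"
    using elliptical_potential_wnorm[of X K] phi_bound kappa_pos[OF hH]
    by (intro mult_left_mono) (auto simp: X_def kappa_def)
  finally show ?thesis
    unfolding X_def Sigma_eq_regularized_gram .
qed

end
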